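(* Let $G$ be an outside option CDF on $[0,1]$ with mean $\xi\in(0,1)$, full support, and a log-concave density $g$, known to the seller. For $s\in[0,\xi)$ let $a(s)$ solve $\int_{a}^1(v-a)\,dG(v)=s$, let $p_h$ be the unique solution of $p=G(1-p)/g(1-p)$, and let $p^o(s)$ be the optimal price, namely $p^o(s)=1-a(s)$ if $1-a(s)\ge p_hG(1-p_h)$ and $p^o(s)=p_h$ otherwise. Then there exists $\hat s_G\in(0,\xi)$ such that $p^o(s)=p_h$ for every $s<\hat s_G$ and $p^o(s)=1-a(s)$ for every $s\ge\hat s_G$; moreover, at $s=\hat s_G$ the optimal price drops from $p_h$ to $1-a(\hat s_G)$, i.e., $1-a(\hat s_G)<p_h$.
   Context: Setting: a seller with a product of binary match value ($\mathbb P(x=1)=\mu\in(0,1)$) chooses a price $p\in[0,1]$ and a distribution $H$ on $[0,1]$ of the buyer's posterior with mean $\mu$, to maximize revenue $p\int_0^1[1-H(p+\min\{a,v\})]\,dG(v)$ for the known outside option CDF $G$, where $s\in[0,\xi)$ is the buyer's search cost. With full information (which is optimal in this setting), the optimal price is $p^o(s)$ as given in the claim. *)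

theory Defs
  imports "HOL-Analysis.Analysis"
begin

definition opt_price :: "(real \<Rightarrow> real) \<Rightarrow> (real \<Rightarrow> real) \<Rightarrow> real \<Rightarrow> real \<Rightarrow> real" where
  "opt_price G a ph s = (if 1 - a s \<ge> ph * G (1 - ph) then 1 - a s else ph)"

end

theory Submission
  imports Defs
begin

(* The expected excess \<phi>(t) = \<integral>\<^sub>t\<^sup>1 (v - t) dG(v) is strictly decreasing on [0,1], from \<xi> to 0,
   and a(s) is its inverse. Hence 1 - a(s) \<ge> c := p_h G(1 - p_h) holds exactly when s \<ge> \<phi>(1 - c),
   which is the threshold s_G. Since 0 < G(1 - p_h) < 1 we have 0 < c < p_h, so the threshold is interior
   and the price drops to 1 - a(s_G) = c < p_h. *)

lemma integral_pos_if_pos_on_interior: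
  fixes f :: "real \<Rightarrow> real"
  assumes "x < y" and "f integrable_on {x..y}" and pos: "\<And>t. t \<in> {x<..<y} \<Longrightarrow> 0 < f t"
  shows "0 < integral {x..y} f"
proof -
  let ?S = "{x<..<y}"
  have "f absolutely_integrable_on ?S"
    using assms by (intro nonnegative_absolutely_integrable_1)
      (auto simp: integrable_on_open_interval_real less_imp_le)
  then have int: "integrable (lebesgue_on ?S) f"
    by (simp add: integrable_restrict_space set_integrable_def)
  interpret finite_measure "lebesgue_on ?S"
    by (rule finite_measure_lebesgue_on) simp
  have "integral\<^sup>L (lebesgue_on ?S) (\<lambda>_. 0) < integral\<^sup>L (lebesgue_on ?S) f"
    using pos \<open>x < y\<close>
    by (intro integral_less_AE_space int) (auto simp: emeasure_restrict_space)
  then show ?thesis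
    by (simp add: lebesgue_integral_eq_integral[OF int] integral_open_interval_real)
qed

lemma continuous_mult_absolutely_integrable:
  fixes h g :: "real \<Rightarrow> real"
  assumes "continuous_on {a..b} h" and "g absolutely_integrable_on {a..b}"
  shows "(\<lambda>v. h v * g v) absolutely_integrable_on {a..b}"
proof (rule absolutely_integrable_bounded_measurable_product_real[OF _ _ _ assms(2)])
  show "h \<in> borel_measurable (lebesgue_on {a..b})"
    using assms(1) by (intro continuous_imp_measurable_on_sets_lebesgue) auto
  show "bounded (h ` {a..b})"
    using assms(1) by (intro compact_imp_bounded compact_continuous_image) auto
qed simp

lemma strict_antimono_on_le_iff:
  fixes f :: "'a::linorder \<Rightarrow> 'b::linorder"
  assumes "strict_antimono_on S f" and "x \<in> S" and "y \<in> S"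
  shows "f x \<le> f y \<longleftrightarrow> y \<le> x"
  using monotone_onD[OF assms(1)] assms(2,3) by (metis leD le_less linorder_le_less_linear)

definition expected_excess :: "(real \<Rightarrow> real) \<Rightarrow> real \<Rightarrow> real" where
  "expected_excess g t = integral {t..1} (\<lambda>v. (v - t) * g v)"

locale positive_density =
  fixes g :: "real \<Rightarrow> real"
  assumes integrable: "g integrable_on {0..1}"
    and pos: "\<And>v. v \<in> {0<..<1} \<Longrightarrow> 0 < g v"
begin

lemma integrable_on_subinterval_01: "0 \<le> u \<Longrightarrow> w \<le> 1 \<Longrightarrow> g integrable_on {u..w}"
  by (rule integrable_on_subinterval[OF integrable]) auto

lemma integral_subinterval_pos: "0 \<le> u \<Longrightarrow> u < w \<Longrightarrow> w \<le> 1 \<Longrightarrow> 0 < integral {u..w} g"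
  by (intro integral_pos_if_pos_on_interior integrable_on_subinterval_01 pos) auto

lemma integral_subinterval_nonneg: "0 \<le> u \<Longrightarrow> u \<le> w \<Longrightarrow> w \<le> 1 \<Longrightarrow> 0 \<le> integral {u..w} g"
  using integral_subinterval_pos[of u w] by (cases "u = w") auto

lemma cdf_strictly_between:
  assumes "0 < x" and "x < 1"
  shows "0 < integral {0..x} g" and "integral {0..x} g < integral {0..1} g"
proof -
  show "0 < integral {0..x} g"
    using assms by (intro integral_subinterval_pos) auto
  have "integral {0..x} g + integral {x..1} g = integral {0..1} g"
    using assms by (intro Henstock_Kurzweil_Integration.integral_combine integrable) auto
  then show "integral {0..x} g < integral {0..1} g"
    using integral_subinterval_pos[of x 1] assms by linarith
qed

lemma excess_integrand_integrable:
  assumes "0 \<le> u" and "w \<le> 1"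
  shows "(\<lambda>v. (v - t) * g v) integrable_on {u..w}"
proof -
  have "g absolutely_integrable_on {0..1}"
    unfolding absolutely_integrable_on_Icc_iff_Ioo
    using integrable pos by (intro nonnegative_absolutely_integrable_1)
      (auto simp: integrable_on_open_interval_real less_imp_le)
  then have "(\<lambda>v. (v - t) * g v) integrable_on {0..1}"
    by (intro set_lebesgue_integral_eq_integral(1) continuous_mult_absolutely_integrable)
      (auto intro!: continuous_intros)
  then show ?thesis
    by (rule integrable_on_subinterval) (use assms in auto)
qed

lemma expected_excess_strict_antimono: "strict_antimono_on {0..1} (expected_excess g)"
proof (rule monotone_onI)
  fix u w :: real
  assume "u \<in> {0..1}" "w \<in> {0..1}" "u < w"
  then have uw: "0 \<le> u" "u < w" "w \<le> 1" by auto
  have "expected_excess g u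
      = integral {u..w} (\<lambda>v. (v - u) * g v) + integral {w..1} (\<lambda>v. (v - u) * g v)"
    unfolding expected_excess_def using uw
    by (intro Henstock_Kurzweil_Integration.integral_combine[symmetric] excess_integrand_integrable) auto
  also have "integral {w..1} (\<lambda>v. (v - u) * g v)
      = integral {w..1} (\<lambda>v. (v - w) * g v + (w - u) * g v)"
    by (rule integral_cong) (simp add: algebra_simps)
  also have "\<dots> = expected_excess g w + (w - u) * integral {w..1} g"
    unfolding expected_excess_def using uw
    by (simp add: integral_add excess_integrand_integrable integrable_on_subinterval_01
        integrable_on_cmult_right)
  finally have split: "expected_excess g u
      = integral {u..w} (\<lambda>v. (v - u) * g v) + expected_excess g w + (w - u) * integral {w..1} g"
    by simp
  have "0 < integral {u..w} (\<lambda>v. (v - u) * g v)"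
    using uw by (intro integral_pos_if_pos_on_interior excess_integrand_integrable)
      (auto intro!: mult_pos_pos pos)
  moreover have "0 \<le> (w - u) * integral {w..1} g"
    using uw integral_subinterval_nonneg[of w 1] by simp
  ultimately show "expected_excess g w < expected_excess g u"
    using split by linarith
qed

end

theorem corollary1:
  fixes g G a :: "real \<Rightarrow> real" and \<xi> ph :: real
  assumes g_int: "g integrable_on {0..1}"
    and g_total: "integral {0..1} g = 1"
    and g_pos: "\<And>x. x \<in> {0<..<1} \<Longrightarrow> g x > 0"
    and g_logconc: "concave_on {0<..<1} (\<lambda>x. ln (g x))"
    and G_def: "\<And>x. x \<in> {0..1} \<Longrightarrow> G x = integral {0..x} g"
    and xi_def: "\<xi> = integral {0..1} (\<lambda>v. v * g v)"
    and xi_bounds: "0 < \<xi>" "\<xi> < 1"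
    and a_sol: "\<And>s. s \<in> {0..<\<xi>} \<Longrightarrow>
                  a s \<in> {0..1} \<and> integral {a s..1} (\<lambda>v. (v - a s) * g v) = s"
    and ph_sol: "ph \<in> {0<..<1}" "ph = G (1 - ph) / g (1 - ph)"
  shows "\<exists>sh \<in> {0<..<\<xi>}.
           (\<forall>s \<in> {0..<sh}. opt_price G a ph s = ph) \<and>
           (\<forall>s \<in> {sh..<\<xi>}. opt_price G a ph s = 1 - a s) \<and>
           1 - a sh < ph"
proof -
  interpret positive_density g
    using g_int g_pos by unfold_locales
  let ?\<phi> = "expected_excess g"
  have decreasing: "strict_antimono_on {0..1} ?\<phi>"
    by (rule expected_excess_strict_antimono)
  have a_inverse: "a s \<in> {0..1}" "?\<phi> (a s) = s" if "s \<in> {0..<\<xi>}" for s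
    using a_sol[OF that] unfolding expected_excess_def by auto
  define c where "c = ph * G (1 - ph)"
  have "0 < G (1 - ph)" "G (1 - ph) < 1"
    using cdf_strictly_between[of "1 - ph"] ph_sol(1) G_def g_total by auto
  then have c: "0 < c" "c < ph"
    using ph_sol(1) by (auto simp: c_def)
  define sh where "sh = ?\<phi> (1 - c)"
  have "?\<phi> 1 < sh" "sh < ?\<phi> 0"
    using c ph_sol(1) monotone_onD[OF decreasing] unfolding sh_def by auto
  then have sh: "sh \<in> {0<..<\<xi>}"
    by (simp add: expected_excess_def xi_def)
  have switch: "c \<le> 1 - a s \<longleftrightarrow> sh \<le> s" if "s \<in> {0..<\<xi>}" for s
    using strict_antimono_on_le_iff[OF decreasing, of "1 - c" "a s"] a_inverse[OF that] c ph_sol(1)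
    unfolding sh_def by auto
  have "a sh = 1 - c"
    using strict_antimono_on_le_iff[OF decreasing, of "1 - c" "a sh"]
      strict_antimono_on_le_iff[OF decreasing, of "a sh" "1 - c"] a_inverse[of sh] sh c ph_sol(1)
    unfolding sh_def by auto
  then show ?thesis
    unfolding opt_price_def c_def[symmetric]
    using sh switch c by (intro bexI[of _ sh]) auto
qed

end
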